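(* Fix $n\ge1$, $\tau>0$, $\beta\in(0,1)$ and use the notation of the context, with $\bar r=\sqrt{R^2-s^2}$. For $x\in\mathbb{R}^n$ with $|x|\le\beta R$ and $r\in(R-s,R+s)$: \[ \cos\theta(x,r)=\frac{r^2+\bar r^2}{2Rr},\qquad \partial_r\theta(x,r)=-\frac{1}{\sin\theta(x,r)}\cdot\frac{r^2-\bar r^2}{2Rr^2}. \] Moreover $h(x,\cdot)>0$ on $(R-s,R+s)$ and $h=0$ at $r=R\pm s$, and \[ \gamma'(\theta(x,r))\,\partial_r\theta(x,r)=-\frac{1+O(N^{-1})}{4\sqrt{\pi\tau}\,r^2}\,(r^2-\bar r^2)\Big(1-\frac{(r^2+\bar r^2)^2}{8N\tau r^2}\Big)^{\frac{N-3}{2}}, \] where $\gamma'$ is the derivative of $\gamma$ in $\theta$ and $O(N^{-1})$ is bounded by a constant times $N^{-1}$ independent of $N$.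
   Context: For $N\ge3$: $R=\sqrt{2N\tau}$, $\bar y\in\mathbb{R}^N$ with $|\bar y|=R$; for $|x|\le\beta R$, $s=s(x)=\sqrt{\beta^2R^2-|x|^2}$. $\gamma(\theta)=\gamma(N,\theta)$ is the fraction of the volume of $S^{N-1}$ contained in a geodesic ball of radius $\theta\in[0,\pi]$. For $r\in[R-s,R+s]$, the part of the sphere $\{|y|=r\}\subset\mathbb{R}^N$ inside $B_s(\bar y)$ is a spherical cap centered at $r\bar y/R$; $\theta(x,r)$ is its angular radius. $h(x,r)=r\,\gamma(\theta(x,r))$. *)

theory Defs
  imports "HOL-Analysis.Analysis"
begin

text \<open>Points of R^N are represented as functions nat => real; only the coordinates
  0..N-1 matter (norm and inner product only use them). The dimension N is explicit
  because the statement quantifies over N uniformly (the O(N^-1) constant).\<close>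

definition enorm :: "nat \<Rightarrow> (nat \<Rightarrow> real) \<Rightarrow> real" where
  "enorm N y = sqrt (\<Sum>i<N. (y i)\<^sup>2)"

definition einner :: "nat \<Rightarrow> (nat \<Rightarrow> real) \<Rightarrow> (nat \<Rightarrow> real) \<Rightarrow> real" where
  "einner N y z = (\<Sum>i<N. y i * z i)"

abbreviation lebN :: "nat \<Rightarrow> (nat \<Rightarrow> real) measure" where
  "lebN N \<equiv> PiM {..<N} (\<lambda>_. lborel)"

text \<open>gamma(N,theta): fraction of the volume of S^{N-1} lying in a geodesic ball of radius
  theta (centred at e_0). Normalised surface measure on the sphere is realised as the
  normalised cone measure: a subset A of the sphere gets the Lebesgue measure of
  {t u : 0 < t <= 1, u in A} divided by the volume of the unit ball. The geodesic distance
  from e_0 to y/|y| is arccos (y_0/|y|).\<close>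
definition sph_cone :: "nat \<Rightarrow> real \<Rightarrow> (nat \<Rightarrow> real) set" where
  "sph_cone N \<theta> = {y \<in> space (lebN N). 0 < enorm N y \<and> enorm N y \<le> 1 \<and>
       arccos (y 0 / enorm N y) \<le> \<theta>}"

definition sph_frac :: "nat \<Rightarrow> real \<Rightarrow> real" where
  "sph_frac N \<theta> = measure (lebN N) (sph_cone N \<theta>) /
                    measure (lebN N) {y \<in> space (lebN N). enorm N y \<le> 1}"

text \<open>Angular radius of the spherical cap {|y| = r} \<inter> closed ball B_s(ybar), centred at
  r ybar / |ybar|: the largest angle between a point of the cap and ybar.\<close>
definition cap_angle :: "nat \<Rightarrow> (nat \<Rightarrow> real) \<Rightarrow> real \<Rightarrow> real \<Rightarrow> real" where
  "cap_angle N ybar s r =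
     Sup ((\<lambda>y. arccos (einner N y ybar / (enorm N y * enorm N ybar))) `
          {y. enorm N y = r \<and> enorm N (\<lambda>i. y i - ybar i) \<le> s})"

definition Rrad :: "nat \<Rightarrow> real \<Rightarrow> real" where
  "Rrad N \<tau> = sqrt (2 * real N * \<tau>)"

definition sval :: "nat \<Rightarrow> real \<Rightarrow> real \<Rightarrow> nat \<Rightarrow> (nat \<Rightarrow> real) \<Rightarrow> real" where
  "sval N \<tau> \<beta> n x = sqrt (\<beta>\<^sup>2 * (Rrad N \<tau>)\<^sup>2 - (enorm n x)\<^sup>2)"

definition rbar :: "nat \<Rightarrow> real \<Rightarrow> real \<Rightarrow> nat \<Rightarrow> (nat \<Rightarrow> real) \<Rightarrow> real" where
  "rbar N \<tau> \<beta> n x = sqrt ((Rrad N \<tau>)\<^sup>2 - (sval N \<tau> \<beta> n x)\<^sup>2)"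

definition theta :: "nat \<Rightarrow> real \<Rightarrow> real \<Rightarrow> nat \<Rightarrow> (nat \<Rightarrow> real) \<Rightarrow> (nat \<Rightarrow> real) \<Rightarrow> real \<Rightarrow> real" where
  "theta N \<tau> \<beta> n x ybar r = cap_angle N ybar (sval N \<tau> \<beta> n x) r"

definition hfun :: "nat \<Rightarrow> real \<Rightarrow> real \<Rightarrow> nat \<Rightarrow> (nat \<Rightarrow> real) \<Rightarrow> (nat \<Rightarrow> real) \<Rightarrow> real \<Rightarrow> real" where
  "hfun N \<tau> \<beta> n x ybar r = r * sph_frac N (theta N \<tau> \<beta> n x ybar r)"

definition setting :: "nat \<Rightarrow> nat \<Rightarrow> real \<Rightarrow> real \<Rightarrow> (nat \<Rightarrow> real) \<Rightarrow> (nat \<Rightarrow> real) \<Rightarrow> bool" where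
  "setting N n \<tau> \<beta> x ybar \<longleftrightarrow> 3 \<le> N \<and> 1 \<le> n \<and> 0 < \<tau> \<and> 0 < \<beta> \<and> \<beta> < 1 \<and>
     enorm N ybar = Rrad N \<tau> \<and> enorm n x \<le> \<beta> * Rrad N \<tau>"

end

theory Submission
  imports Defs
begin

text \<open>By the law of cosines, the points of the sphere of radius r at distance at most s from
  ybar are exactly those whose angle with ybar is at most arccos ((r^2 + R^2 - s^2) / (2 R r)),
  so cos theta is explicit and the formula for the r-derivative of theta is the chain rule
  for arccos. Slicing the unit ball of R^N along the first coordinate (each slice being an
  (N-1)-ball) gives gamma(theta) = (sin^(N-1) theta cos theta / N + int_0^theta sin^N) / W_N,
  with the Wallis integral W_N = int_0^pi sin^N, whence
  gamma'(theta) = (N-1)/N * sin^(N-2) theta / W_N. The Wallis bounds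
  2 pi/(N+1) <= W_N^2 <= 2 pi/N turn the constant into 1/(4 sqrt (pi tau)) up to a factor
  1 + O(1/N), and since R^2 = 2 N tau the base of the power is exactly sin^2 theta.\<close>

section \<open>Wallis integrals\<close>

definition wallis :: "nat \<Rightarrow> real" where
  "wallis k = integral {0..pi} (\<lambda>x. sin x ^ k)"

lemma wallis_0: "wallis 0 = pi"
  unfolding wallis_def by simp

lemma wallis_1: "wallis (Suc 0) = 2"
proof -
  have "(sin has_integral (- cos pi - - cos 0)) {0..pi}"
    by (rule fundamental_theorem_of_calculus)
       (auto intro!: derivative_eq_intros simp: has_real_derivative_iff_has_vector_derivative[symmetric])
  thus ?thesis unfolding wallis_def by (simp add: integral_unique)
qed

lemma wallis_nonneg: "0 \<le> wallis k"
  unfolding wallis_def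
  by (intro integral_nonneg integrable_continuous_real continuous_intros) (auto simp: sin_ge_zero)

lemma wallis_Suc_le: "wallis (Suc k) \<le> wallis k"
  unfolding wallis_def
proof (intro integral_le integrable_continuous_real continuous_intros)
  fix x assume "x \<in> {0..pi}"
  hence "0 \<le> sin x" "sin x \<le> 1" by (auto simp: sin_ge_zero)
  thus "sin x ^ Suc k \<le> sin x ^ k" by (simp add: mult_left_le_one_le)
qed

lemma has_real_derivative_sin_power_Suc_cos:
  "((\<lambda>x. sin x ^ Suc k * cos x) has_real_derivative
      (real k + 1) * sin x ^ k - (real k + 2) * sin x ^ Suc (Suc k)) (at x within S)"
proof -
  have "((\<lambda>x. sin x ^ Suc k) has_real_derivative real (Suc k) * (cos x * sin x ^ k)) (at x within S)"
    using DERIV_power[OF DERIV_sin[of x], of "Suc k"] has_field_derivative_at_within by simp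
  hence deriv: "((\<lambda>x. sin x ^ Suc k * cos x) has_real_derivative
          real (Suc k) * (cos x * sin x ^ k) * cos x + - sin x * sin x ^ Suc k) (at x within S)"
    by (intro DERIV_mult DERIV_cos[THEN has_field_derivative_at_within])
  have "real (Suc k) * (cos x * sin x ^ k) * cos x + - sin x * sin x ^ Suc k
      = (real k + 1) * sin x ^ k * (cos x)\<^sup>2 - sin x ^ Suc (Suc k)"
    by (simp add: power2_eq_square algebra_simps)
  also have "\<dots> = (real k + 1) * sin x ^ k - (real k + 2) * sin x ^ Suc (Suc k)"
    by (simp only: cos_squared_eq) (simp add: power2_eq_square algebra_simps)
  finally show ?thesis using deriv by (simp only:)
qed

lemma wallis_Suc_Suc: "wallis (k + 2) = (real k + 1) / (real k + 2) * wallis k"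
proof -
  let ?F = "\<lambda>x::real. - (sin x ^ Suc k * cos x)"
  let ?f = "\<lambda>x::real. (real k + 2) * sin x ^ (k + 2) - (real k + 1) * sin x ^ k"
  have deriv: "(?F has_real_derivative ?f x) (at x within {0..pi})" for x
    using DERIV_minus[OF has_real_derivative_sin_power_Suc_cos[of k x "{0..pi}"]] by simp
  have "(?f has_integral (?F pi - ?F 0)) {0..pi}"
    by (rule fundamental_theorem_of_calculus)
       (use deriv in \<open>auto simp: has_real_derivative_iff_has_vector_derivative\<close>)
  hence "(?f has_integral 0) {0..pi}" by simp
  moreover have "(?f has_integral ((real k + 2) * wallis (k + 2) - (real k + 1) * wallis k)) {0..pi}"
    unfolding wallis_def
    by (intro has_integral_diff has_integral_mult_right integrable_integral
          integrable_continuous_interval continuous_intros)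
  ultimately have "(real k + 2) * wallis (k + 2) - (real k + 1) * wallis k = 0"
    using has_integral_unique by blast
  thus ?thesis by (simp add: field_simps)
qed

lemma wallis_Suc_mult: "(real k + 1) * wallis (Suc k) * wallis k = 2 * pi"
proof (induction k)
  case 0
  thus ?case by (simp add: wallis_0 wallis_1)
next
  case (Suc k)
  have "(real (Suc k) + 1) * wallis (Suc (Suc k)) * wallis (Suc k) = (real k + 1) * wallis (Suc k) * wallis k"
    using wallis_Suc_Suc[of k] by (simp add: field_simps)
  thus ?case using Suc by simp
qed

lemma wallis_square_bounds:
  assumes "1 \<le> k"
  shows "2 * pi / (real k + 1) \<le> (wallis k)\<^sup>2" "(wallis k)\<^sup>2 \<le> 2 * pi / real k"
proof -
  have "(real k + 1) * (wallis (Suc k) * wallis k) \<le> (real k + 1) * (wallis k * wallis k)"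
    by (intro mult_left_mono mult_right_mono wallis_Suc_le wallis_nonneg) auto
  thus "2 * pi / (real k + 1) \<le> (wallis k)\<^sup>2"
    using wallis_Suc_mult[of k] by (simp add: field_simps power2_eq_square)
  obtain j where j: "k = Suc j" using assms by (cases k) auto
  have "real k * (wallis k * wallis k) \<le> real k * (wallis k * wallis j)"
    unfolding j by (intro mult_left_mono wallis_Suc_le wallis_nonneg) auto
  thus "(wallis k)\<^sup>2 \<le> 2 * pi / real k"
    using wallis_Suc_mult[of j] assms j by (simp add: field_simps power2_eq_square)
qed

lemma wallis_pos:
  assumes "1 \<le> k"
  shows "0 < wallis k"
proof -
  have "0 < 2 * pi / (real k + 1)" by simp
  also have "\<dots> \<le> (wallis k)\<^sup>2" using assms by (rule wallis_square_bounds(1))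
  finally have "wallis k \<noteq> 0" by auto
  with wallis_nonneg[of k] show ?thesis by simp
qed

lemma wallis_ratio_error:
  assumes N: "1 \<le> N"
  shows "\<bar>(real N - 1) / real N * (sqrt (2 * pi / real N) / wallis N) - 1\<bar> \<le> 1 / real N"
proof -
  define a where "a = 1 / real N"
  define q where "q = sqrt (2 * pi / real N) / wallis N"
  have Np: "0 < real N" using N by simp
  have a: "0 \<le> a" "a \<le> 1" unfolding a_def using N by auto
  have W: "0 < wallis N" using N by (rule wallis_pos)
  have lb: "2 * pi / (real N + 1) \<le> (wallis N)\<^sup>2" and ub: "(wallis N)\<^sup>2 \<le> 2 * pi / real N"
    using wallis_square_bounds[OF N] by auto
  have q0: "0 \<le> q" unfolding q_def using W by simp
  have q2: "q\<^sup>2 = (2 * pi / real N) / (wallis N)\<^sup>2" unfolding q_def by (simp add: power_divide)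
  have "1 \<le> q\<^sup>2" unfolding q2 using ub W by (subst le_divide_eq_1_pos) auto
  hence q_ge: "1 \<le> q" using q0 power2_le_imp_le[of 1 q] by simp
  have "q\<^sup>2 \<le> (2 * pi / real N) / (2 * pi / (real N + 1))" unfolding q2
    by (rule divide_left_mono) (use lb W Np in auto)
  also have "\<dots> = 1 + a" unfolding a_def using Np by (simp add: field_simps)
  also have "\<dots> \<le> (1 + a)\<^sup>2" using a by (simp add: power2_eq_square algebra_simps)
  finally have "q\<^sup>2 \<le> (1 + a)\<^sup>2" .
  hence q_le: "q \<le> 1 + a" using a power2_le_imp_le[of q "1 + a"] by simp
  have lo: "1 - a \<le> (1 - a) * q" using q_ge a mult_left_mono[of 1 q "1 - a"] by simp
  have "(1 - a) * q \<le> (1 - a) * (1 + a)" using q_le a mult_left_mono[of q "1 + a" "1 - a"] by simp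
  also have "\<dots> = 1 - a * a" by (simp add: algebra_simps)
  finally have hi: "(1 - a) * q \<le> 1 - a * a" .
  have "0 \<le> a * a" by simp
  hence "\<bar>(1 - a) * q - 1\<bar> \<le> a" using lo hi a unfolding abs_le_iff by linarith
  moreover have "(real N - 1) / real N = 1 - a" unfolding a_def using Np by (simp add: field_simps)
  ultimately show ?thesis unfolding a_def q_def by simp
qed

section \<open>One-dimensional integrals\<close>

lemma has_integral_sqrt_one_minus_square_power:
  assumes "0 \<le> \<theta>" "\<theta> \<le> pi"
  shows "((\<lambda>t. sqrt (1 - t\<^sup>2) ^ m) has_integral integral {0..\<theta>} (\<lambda>x. sin x ^ Suc m)) {cos \<theta>..1}"
proof -
  let ?f = "\<lambda>t::real. sqrt (1 - t\<^sup>2) ^ m"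
  have "((\<lambda>x. (- sin x) *\<^sub>R ?f (cos x)) has_integral
          (integral {cos 0..cos \<theta>} ?f - integral {cos \<theta>..cos 0} ?f)) {0..\<theta>}"
  proof (rule has_integral_substitution_general[of "{}" 0 \<theta> cos "-1" 1])
    show "continuous_on {- 1..1} ?f" "continuous_on {0..\<theta>} cos" by (intro continuous_intros)+
    show "(cos has_real_derivative - sin x) (at x within {0..\<theta>})" for x
      by (rule DERIV_cos[THEN has_field_derivative_at_within])
  qed (use assms in auto)
  moreover have "integral {1..cos \<theta>} ?f = 0"
  proof (cases "cos \<theta> = 1")
    case True
    thus ?thesis by (simp only: atLeastAtMost_singleton integral_singleton)
  next
    case False
    hence "cos \<theta> < 1" using cos_le_one[of \<theta>] by linarith
    hence "{1..cos \<theta>} = {}" by simp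
    thus ?thesis by (simp only: integral_empty)
  qed
  ultimately have substituted:
      "((\<lambda>x. (- sin x) *\<^sub>R ?f (cos x)) has_integral - integral {cos \<theta>..1} ?f) {0..\<theta>}"
    by simp
  have "((\<lambda>x. - ((- sin x) *\<^sub>R ?f (cos x))) has_integral integral {cos \<theta>..1} ?f) {0..\<theta>}"
    using has_integral_neg[OF substituted] by simp
  moreover have "- ((- sin x) *\<^sub>R ?f (cos x)) = sin x ^ Suc m" if "x \<in> {0..\<theta>}" for x
  proof -
    have "0 \<le> sin x" using that assms by (auto intro: sin_ge_zero)
    thus ?thesis by (simp add: sin_squared_eq[symmetric])
  qed
  ultimately have "((\<lambda>x. sin x ^ Suc m) has_integral integral {cos \<theta>..1} ?f) {0..\<theta>}"
    using has_integral_cong by (metis (no_types, lifting))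
  hence "integral {0..\<theta>} (\<lambda>x. sin x ^ Suc m) = integral {cos \<theta>..1} ?f" by (rule integral_unique)
  moreover have "(?f has_integral integral {cos \<theta>..1} ?f) {cos \<theta>..1}"
    by (intro integrable_integral integrable_continuous_interval continuous_intros)
  ultimately show ?thesis by simp
qed

lemma has_integral_sqrt_one_minus_square_power_wallis:
  "((\<lambda>t. sqrt (1 - t\<^sup>2) ^ m) has_integral wallis (Suc m)) {-1..1}"
  using has_integral_sqrt_one_minus_square_power[of pi m] unfolding wallis_def by simp

text \<open>For 0 < t <= 1 and 0 <= theta < pi/2, the slice at height t of the sector
  {y. |y| <= 1, angle (y, e_0) <= theta} is the (N-1)-ball of this radius: the cone
  {t tan theta} up to height cos theta, the unit sphere above it.\<close>
definition cone_slice_radius :: "real \<Rightarrow> real \<Rightarrow> real" where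
  "cone_slice_radius \<theta> t = sqrt (min (1 - t\<^sup>2) ((t * tan \<theta>)\<^sup>2))"

definition sector_integral :: "nat \<Rightarrow> real \<Rightarrow> real" where
  "sector_integral N \<theta> = sin \<theta> ^ (N - 1) * cos \<theta> / real N + integral {0..\<theta>} (\<lambda>x. sin x ^ N)"

lemma cone_slice_radius_nonneg: "\<bar>t\<bar> \<le> 1 \<Longrightarrow> 0 \<le> cone_slice_radius \<theta> t"
  unfolding cone_slice_radius_def by (simp add: abs_square_le_1)

lemma power2_mult_tan_add_power2: "cos \<theta> \<noteq> 0 \<Longrightarrow> (t * tan \<theta>)\<^sup>2 + t\<^sup>2 = (t / cos \<theta>)\<^sup>2"
proof -
  assume "cos \<theta> \<noteq> 0"
  have "(t * tan \<theta>)\<^sup>2 + t\<^sup>2 = t\<^sup>2 * (1 + (tan \<theta>)\<^sup>2)" by (simp add: power_mult_distrib algebra_simps)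
  also have "\<dots> = (t / cos \<theta>)\<^sup>2"
    using \<open>cos \<theta> \<noteq> 0\<close> by (simp add: tan_sec divide_inverse power_inverse power_mult_distrib)
  finally show ?thesis .
qed

lemma cone_slice_radius_cone:
  assumes "0 \<le> \<theta>" "\<theta> < pi / 2" "0 \<le> t" "t \<le> cos \<theta>"
  shows "cone_slice_radius \<theta> t = t * tan \<theta>"
proof -
  have c: "0 < cos \<theta>" using assms by (intro cos_gt_zero_pi) auto
  have "(t / cos \<theta>)\<^sup>2 \<le> 1" using assms c by (simp add: power_le_one)
  hence "(t * tan \<theta>)\<^sup>2 \<le> 1 - t\<^sup>2" using power2_mult_tan_add_power2[of \<theta> t] c by simp
  moreover have "0 \<le> tan \<theta>" using assms c unfolding tan_def by (auto intro!: divide_nonneg_pos sin_ge_zero)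
  ultimately show ?thesis using assms unfolding cone_slice_radius_def by simp
qed

lemma cone_slice_radius_cap:
  assumes "0 \<le> \<theta>" "\<theta> < pi / 2" "cos \<theta> \<le> t"
  shows "cone_slice_radius \<theta> t = sqrt (1 - t\<^sup>2)"
proof -
  have c: "0 < cos \<theta>" using assms by (intro cos_gt_zero_pi) auto
  have "1 \<le> (t / cos \<theta>)\<^sup>2" using assms c by (simp add: le_divide_eq power_mono)
  hence "1 - t\<^sup>2 \<le> (t * tan \<theta>)\<^sup>2" using power2_mult_tan_add_power2[of \<theta> t] c by simp
  thus ?thesis unfolding cone_slice_radius_def by simp
qed

lemma has_integral_mult_power:
  assumes "0 \<le> c"
  shows "((\<lambda>t. (t * a) ^ m) has_integral a ^ m * c ^ Suc m / real (Suc m)) {0..c}"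
proof -
  have "((\<lambda>t. a ^ m * t ^ Suc m / real (Suc m)) has_real_derivative (t * a) ^ m)
          (at t within {0..c})" for t
  proof -
    have "((\<lambda>t. a ^ m * t ^ Suc m / real (Suc m)) has_real_derivative
            a ^ m * (real (Suc m) * t ^ (Suc m - Suc 0)) / real (Suc m)) (at t within {0..c})"
      by (intro DERIV_cdivide DERIV_cmult DERIV_pow)
    thus ?thesis by (simp add: power_mult_distrib mult.commute)
  qed
  thus ?thesis
    using fundamental_theorem_of_calculus[of 0 c "\<lambda>t. a ^ m * t ^ Suc m / real (Suc m)"] assms
    by (simp add: has_real_derivative_iff_has_vector_derivative)
qed

lemma has_integral_cone_slice_radius_power:
  assumes \<theta>: "0 \<le> \<theta>" "\<theta> < pi / 2"
  shows "((\<lambda>t. cone_slice_radius \<theta> t ^ m) has_integral sector_integral (Suc m) \<theta>) {0..1}"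
proof -
  have c: "0 < cos \<theta>" using \<theta> by (intro cos_gt_zero_pi) auto
  have "tan \<theta> ^ m * cos \<theta> ^ m = sin \<theta> ^ m"
    using c unfolding tan_def by (simp add: power_mult_distrib[symmetric])
  hence "tan \<theta> ^ m * cos \<theta> ^ Suc m = sin \<theta> ^ m * cos \<theta>" by (simp add: ac_simps)
  hence "((\<lambda>t. (t * tan \<theta>) ^ m) has_integral sin \<theta> ^ m * cos \<theta> / real (Suc m)) {0..cos \<theta>}"
    using has_integral_mult_power[OF less_imp_le[OF c], of "tan \<theta>" m] by (simp only:)
  hence cone: "((\<lambda>t. cone_slice_radius \<theta> t ^ m) has_integral
                  sin \<theta> ^ m * cos \<theta> / real (Suc m)) {0..cos \<theta>}"
    using cone_slice_radius_cone[OF \<theta>] by (metis (no_types, lifting) atLeastAtMost_iff has_integral_cong)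
  have "((\<lambda>t. sqrt (1 - t\<^sup>2) ^ m) has_integral integral {0..\<theta>} (\<lambda>x. sin x ^ Suc m)) {cos \<theta>..1}"
    using has_integral_sqrt_one_minus_square_power[of \<theta> m] \<theta> by simp
  hence cap: "((\<lambda>t. cone_slice_radius \<theta> t ^ m) has_integral
                 integral {0..\<theta>} (\<lambda>x. sin x ^ Suc m)) {cos \<theta>..1}"
    using cone_slice_radius_cap[OF \<theta>] by (metis (no_types, lifting) atLeastAtMost_iff has_integral_cong)
  have "((\<lambda>t. cone_slice_radius \<theta> t ^ m) has_integral
          sin \<theta> ^ m * cos \<theta> / real (Suc m) + integral {0..\<theta>} (\<lambda>x. sin x ^ Suc m)) {0..1}"
    by (rule has_integral_combine[OF _ cos_le_one cone cap]) (use c in simp)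
  thus ?thesis unfolding sector_integral_def by simp
qed

lemma sector_integral_0: "2 \<le> N \<Longrightarrow> sector_integral N 0 = 0"
  unfolding sector_integral_def by simp

lemma sector_integral_pos:
  assumes "1 \<le> N" "0 < \<theta>" "\<theta> < pi / 2"
  shows "0 < sector_integral N \<theta>"
proof -
  have "0 < sin \<theta>" "0 < cos \<theta>" using assms by (auto intro!: sin_gt_zero cos_gt_zero_pi)
  hence "0 < sin \<theta> ^ (N - 1) * cos \<theta> / real N" using assms by simp
  moreover have "0 \<le> integral {0..\<theta>} (\<lambda>x. sin x ^ N)"
    using assms by (intro integral_nonneg integrable_continuous_interval continuous_intros)
       (auto intro!: zero_le_power sin_ge_zero)
  ultimately show ?thesis unfolding sector_integral_def by linarith
qed

lemma sector_integral_has_real_derivative: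
  assumes "2 \<le> N" "0 < \<theta>" "\<theta> < pi / 2"
  shows "(sector_integral N has_real_derivative real (N - 1) / real N * sin \<theta> ^ (N - 2)) (at \<theta>)"
proof -
  obtain k where k: "N = Suc (Suc k)" using assms(1) by (metis add_2_eq_Suc le_Suc_ex)
  have "((\<lambda>x. integral {0..x} (\<lambda>x. sin x ^ N)) has_real_derivative sin \<theta> ^ N)
          (at \<theta> within {0..pi / 2})"
    using assms by (intro integral_has_real_derivative continuous_intros) auto
  hence "((\<lambda>x. integral {0..x} (\<lambda>x. sin x ^ N)) has_real_derivative sin \<theta> ^ N) (at \<theta>)"
    using assms by (simp add: at_within_Icc_at)
  hence "(sector_integral N has_real_derivative
          ((real k + 1) * sin \<theta> ^ k - (real k + 2) * sin \<theta> ^ N) / real N + sin \<theta> ^ N) (at \<theta>)"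
    unfolding sector_integral_def k
    using has_real_derivative_sin_power_Suc_cos[of k \<theta> UNIV] by (auto intro: DERIV_add DERIV_cdivide)
  moreover have "((real k + 1) * sin \<theta> ^ k - (real k + 2) * sin \<theta> ^ N) / real N + sin \<theta> ^ N
      = real (N - 1) / real N * sin \<theta> ^ (N - 2)"
    unfolding k by (simp add: field_simps)
  ultimately show ?thesis by simp
qed

section \<open>Volumes by slicing\<close>

lemma borel_measurable_enorm [measurable]: "(\<lambda>y. enorm N y) \<in> borel_measurable (lebN N)"
  unfolding enorm_def by measurable

lemma enorm_eq_sqrt_first_and_rest:
  assumes "1 \<le> N"
  shows "enorm N y = sqrt ((y 0)\<^sup>2 + (\<Sum>i\<in>{1..<N}. (y i)\<^sup>2))"
proof -
  have "{..<N} = insert 0 {1..<N}" using assms by auto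
  thus ?thesis unfolding enorm_def by simp
qed

lemma emeasure_PiM_ball:
  fixes A :: "'a set"
  assumes "finite A" "A \<noteq> {}" "0 \<le> r"
  shows "emeasure (Pi\<^sub>M A (\<lambda>_. lborel))
           ({f. sqrt (\<Sum>i\<in>A. (f i)\<^sup>2) \<le> r} \<inter> space (Pi\<^sub>M A (\<lambda>_. lborel))) =
         ennreal (unit_ball_vol (real (card A)) * r ^ card A)"
proof (cases "r = 0")
  case False
  thus ?thesis using emeasure_cball_aux[OF assms(1)] assms by simp
next
  case True
  have card: "card A > 0" using assms by (simp add: card_gt_0_iff)
  have "{f. sqrt (\<Sum>i\<in>A. (f i)\<^sup>2) \<le> r} \<inter> space (Pi\<^sub>M A (\<lambda>_. lborel)) \<subseteq> PiE A (\<lambda>_. {0})"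
  proof
    fix f assume f: "f \<in> {f. sqrt (\<Sum>i\<in>A. (f i)\<^sup>2) \<le> r} \<inter> space (Pi\<^sub>M A (\<lambda>_. lborel))"
    hence "(\<Sum>i\<in>A. (f i)\<^sup>2) = 0" using True by (simp add: order.antisym sum_nonneg)
    hence "\<forall>i\<in>A. f i = 0" using assms(1) by (simp add: sum_nonneg_eq_0_iff)
    thus "f \<in> PiE A (\<lambda>_. {0})"
      using f by (auto simp: space_PiM PiE_iff extensional_def fun_eq_iff restrict_def)
  qed
  moreover have "PiE A (\<lambda>_. {0::real}) \<in> sets (Pi\<^sub>M A (\<lambda>_. lborel))"
    by (rule sets_PiM_I_finite) (use assms in auto)
  moreover have "emeasure (Pi\<^sub>M A (\<lambda>_. lborel)) (PiE A (\<lambda>_. {0::real})) = 0"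
  proof -
    interpret product_sigma_finite "\<lambda>_::'a. lborel :: real measure" by standard
    show ?thesis using assms card by (subst emeasure_PiM) auto
  qed
  ultimately show ?thesis using True card by (auto dest: emeasure_mono)
qed

text \<open>Cavalieri's principle along the first coordinate: P t u describes the set through the
  first coordinate t and the squared length u of the remaining N - 1 coordinates, so each slice
  is an (N-1)-ball of radius rho t, empty for t outside T.\<close>
lemma measure_lebN_slices:
  fixes P :: "real \<Rightarrow> real \<Rightarrow> bool" and \<rho> :: "real \<Rightarrow> real"
  assumes N: "2 \<le> N"
    and sets: "{y \<in> space (lebN N). P (y 0) (\<Sum>i\<in>{1..<N}. (y i)\<^sup>2)} \<in> sets (lebN N)"
    and slice: "\<And>t u. 0 \<le> u \<Longrightarrow> P t u \<longleftrightarrow> t \<in> T \<and> sqrt u \<le> \<rho> t"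
    and nonneg: "\<And>t. t \<in> T \<Longrightarrow> 0 \<le> \<rho> t"
    and integral: "((\<lambda>t. \<rho> t ^ (N - 1)) has_integral I) T"
  shows "measure (lebN N) {y \<in> space (lebN N). P (y 0) (\<Sum>i\<in>{1..<N}. (y i)\<^sup>2)} =
           unit_ball_vol (real (N - 1)) * I"
proof -
  define A where "A = {1..<N}"
  have A: "finite A" "0 \<notin> A" "A \<noteq> {}" "card A = N - 1" using N by (auto simp: A_def)
  have ins: "{..<N} = insert 0 A" using N by (auto simp: A_def)
  define S where "S = {y \<in> space (lebN N). P (y 0) (\<Sum>i\<in>A. (y i)\<^sup>2)}"
  define B where "B r = {f. sqrt (\<Sum>i\<in>A. (f i)\<^sup>2) \<le> r} \<inter> space (Pi\<^sub>M A (\<lambda>_. lborel :: real measure))"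
    for r
  have S: "S \<in> sets (Pi\<^sub>M (insert 0 A) (\<lambda>_. lborel))"
    using sets unfolding S_def A_def[symmetric] ins .
  interpret product_sigma_finite "\<lambda>_::nat. lborel :: real measure" by standard
  have "emeasure (lebN N) S = (\<integral>\<^sup>+y. indicator S y \<partial>Pi\<^sub>M (insert 0 A) (\<lambda>_. lborel))"
    using S by (simp add: ins nn_integral_indicator)
  also have "\<dots> = (\<integral>\<^sup>+t. \<integral>\<^sup>+z. indicator S (z(0 := t)) \<partial>Pi\<^sub>M A (\<lambda>_. lborel) \<partial>lborel)"
    using A S by (subst product_nn_integral_insert_rev) auto
  also have "\<dots> = (\<integral>\<^sup>+t. \<integral>\<^sup>+z. indicator T t * indicator (B (\<rho> t)) z \<partial>Pi\<^sub>M A (\<lambda>_. lborel) \<partial>lborel)"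
  proof (intro nn_integral_cong)
    fix t z assume z: "z \<in> space (Pi\<^sub>M A (\<lambda>_. lborel :: real measure))"
    have "z(0 := t) \<in> space (lebN N)"
      using z A unfolding ins by (auto simp: space_PiM PiE_iff extensional_def)
    moreover have "(\<Sum>i\<in>A. ((z(0 := t)) i)\<^sup>2) = (\<Sum>i\<in>A. (z i)\<^sup>2)"
      using A by (intro sum.cong) auto
    moreover have "0 \<le> (\<Sum>i\<in>A. (z i)\<^sup>2)" by (simp add: sum_nonneg)
    ultimately show "indicator S (z(0 := t)) = (indicator T t * indicator (B (\<rho> t)) z :: ennreal)"
      using z slice by (auto simp: S_def B_def indicator_def)
  qed
  also have "\<dots> = (\<integral>\<^sup>+t. indicator T t * emeasure (Pi\<^sub>M A (\<lambda>_. lborel)) (B (\<rho> t)) \<partial>lborel)"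
    by (intro nn_integral_cong) (simp add: nn_integral_cmult nn_integral_indicator B_def)
  also have "\<dots> = (\<integral>\<^sup>+t. ennreal (indicator T t * (unit_ball_vol (real (N - 1)) * \<rho> t ^ (N - 1))) \<partial>lborel)"
    unfolding B_def using emeasure_PiM_ball[OF A(1,3) nonneg] A(4) nonneg
    by (intro nn_integral_cong) (auto simp: indicator_def)
  also have "\<dots> = ennreal (unit_ball_vol (real (N - 1)) * I)"
    using nonneg integral by (intro nn_integral_has_integral_lebesgue has_integral_mult_right) auto
  finally have "emeasure (lebN N) S = ennreal (unit_ball_vol (real (N - 1)) * I)" .
  moreover have "0 \<le> I" using integral nonneg by (auto intro: has_integral_nonneg)
  ultimately show ?thesis unfolding S_def A_def by (simp add: measure_def)
qed

lemma measure_lebN_unit_ball: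
  assumes "2 \<le> N"
  shows "measure (lebN N) {y \<in> space (lebN N). enorm N y \<le> 1} = unit_ball_vol (real (N - 1)) * wallis N"
proof -
  have ball: "{y \<in> space (lebN N). enorm N y \<le> 1} =
                {y \<in> space (lebN N). sqrt ((y 0)\<^sup>2 + (\<Sum>i\<in>{1..<N}. (y i)\<^sup>2)) \<le> 1}"
    using enorm_eq_sqrt_first_and_rest assms by auto
  have sets: "{y \<in> space (lebN N). enorm N y \<le> 1} \<in> sets (lebN N)" by measurable
  have slice: "sqrt (t\<^sup>2 + u) \<le> 1 \<longleftrightarrow> t \<in> {-1..1} \<and> sqrt u \<le> sqrt (1 - t\<^sup>2)"
    if "0 \<le> u" for t u :: real
  proof -
    have "sqrt (t\<^sup>2 + u) \<le> 1 \<longleftrightarrow> t\<^sup>2 \<le> 1 \<and> u \<le> 1 - t\<^sup>2" using that by auto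
    thus ?thesis by (auto simp: abs_square_le_1 abs_le_iff)
  qed
  have integral: "((\<lambda>t. sqrt (1 - t\<^sup>2) ^ (N - 1)) has_integral wallis N) {-1..1}"
    using has_integral_sqrt_one_minus_square_power_wallis[of "N - 1"] assms by simp
  show ?thesis unfolding ball
  proof (rule measure_lebN_slices[where T = "{-1..1}" and \<rho> = "\<lambda>t. sqrt (1 - t\<^sup>2)", OF assms])
    show "{y \<in> space (lebN N). sqrt ((y 0)\<^sup>2 + (\<Sum>i\<in>{1..<N}. (y i)\<^sup>2)) \<le> 1} \<in> sets (lebN N)"
      using sets unfolding ball .
    show "sqrt (t\<^sup>2 + u) \<le> 1 \<longleftrightarrow> t \<in> {-1..1} \<and> sqrt u \<le> sqrt (1 - t\<^sup>2)" if "0 \<le> u" for t u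
      using slice[OF that] .
    show "0 \<le> sqrt (1 - t\<^sup>2)" if "t \<in> {-1..1}" for t
      using that by (simp add: abs_square_le_1 abs_le_iff)
  qed (fact integral)
qed

lemma arccos_le_iff_cos_le:
  assumes "-1 \<le> v" "v \<le> 1" "0 \<le> \<theta>" "\<theta> \<le> pi"
  shows "arccos v \<le> \<theta> \<longleftrightarrow> cos \<theta> \<le> v"
proof -
  have "arccos v \<le> \<theta> \<longleftrightarrow> cos \<theta> \<le> cos (arccos v)"
    using assms by (intro cos_mono_le_eq[symmetric]) (auto intro: arccos_lbound arccos_ubound)
  thus ?thesis using assms by (simp add: cos_arccos)
qed

lemma sph_cone_eq:
  assumes "1 \<le> N" "0 \<le> \<theta>" "\<theta> \<le> pi"
  shows "sph_cone N \<theta> = {y \<in> space (lebN N). 0 < enorm N y \<and> enorm N y \<le> 1 \<and> cos \<theta> * enorm N y \<le> y 0}"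
proof -
  have "arccos (y 0 / enorm N y) \<le> \<theta> \<longleftrightarrow> cos \<theta> * enorm N y \<le> y 0" if pos: "0 < enorm N y" for y
  proof -
    have "\<bar>y 0\<bar> = sqrt ((y 0)\<^sup>2)" by simp
    also have "\<dots> \<le> enorm N y"
      unfolding enorm_eq_sqrt_first_and_rest[OF assms(1)]
      by (intro real_sqrt_le_mono) (simp add: sum_nonneg)
    finally have "-1 \<le> y 0 / enorm N y" "y 0 / enorm N y \<le> 1"
      using pos by (auto simp: divide_le_eq le_divide_eq abs_le_iff)
    hence "arccos (y 0 / enorm N y) \<le> \<theta> \<longleftrightarrow> cos \<theta> \<le> y 0 / enorm N y"
      using assms by (intro arccos_le_iff_cos_le) auto
    thus ?thesis using pos by (simp add: le_divide_eq)
  qed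
  thus ?thesis unfolding sph_cone_def by auto
qed

lemma cone_slice_iff:
  assumes \<theta>: "0 \<le> \<theta>" "\<theta> < pi / 2" and u: "0 \<le> u"
  shows "(0 < sqrt (t\<^sup>2 + u) \<and> sqrt (t\<^sup>2 + u) \<le> 1 \<and> cos \<theta> * sqrt (t\<^sup>2 + u) \<le> t) \<longleftrightarrow>
         t \<in> {0<..1} \<and> sqrt u \<le> cone_slice_radius \<theta> t"
proof -
  define c where "c = cos \<theta>"
  define e where "e = sqrt (t\<^sup>2 + u)"
  have c: "0 < c" unfolding c_def using \<theta> by (intro cos_gt_zero_pi) auto
  have e: "0 \<le> e" "e\<^sup>2 = t\<^sup>2 + u" unfolding e_def using u by auto
  have radius: "sqrt u \<le> cone_slice_radius \<theta> t \<longleftrightarrow> u \<le> 1 - t\<^sup>2 \<and> u \<le> (t * tan \<theta>)\<^sup>2"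
    unfolding cone_slice_radius_def by simp
  have cone: "c * e \<le> t \<longleftrightarrow> u \<le> (t * tan \<theta>)\<^sup>2" if "0 \<le> t"
  proof -
    have "c * e \<le> t \<longleftrightarrow> (c * e)\<^sup>2 \<le> t\<^sup>2"
      using that c e by (simp add: abs_le_square_iff[symmetric])
    also have "\<dots> \<longleftrightarrow> u * c\<^sup>2 \<le> t\<^sup>2 * (sin \<theta>)\<^sup>2"
      unfolding c_def sin_squared_eq by (simp add: power_mult_distrib e algebra_simps)
    also have "\<dots> \<longleftrightarrow> u \<le> (t * tan \<theta>)\<^sup>2"
      using c unfolding c_def tan_def by (simp add: power_mult_distrib power_divide le_divide_eq)
    finally show ?thesis .
  qed
  show ?thesis
  proof
    assume "0 < sqrt (t\<^sup>2 + u) \<and> sqrt (t\<^sup>2 + u) \<le> 1 \<and> cos \<theta> * sqrt (t\<^sup>2 + u) \<le> t"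
    hence L: "0 < e" "e \<le> 1" "c * e \<le> t" unfolding e_def c_def by auto
    have t: "0 < t" using L c by (meson mult_pos_pos order_less_le_trans)
    have tu: "t\<^sup>2 + u \<le> 1" using L e by (metis power_le_one)
    hence "t\<^sup>2 \<le> 1" using u by linarith
    hence "t \<le> 1" by (simp add: abs_square_le_1 abs_le_iff)
    moreover have "u \<le> 1 - t\<^sup>2" using tu by linarith
    ultimately show "t \<in> {0<..1} \<and> sqrt u \<le> cone_slice_radius \<theta> t" using t L cone radius by auto
  next
    assume "t \<in> {0<..1} \<and> sqrt u \<le> cone_slice_radius \<theta> t"
    hence t: "0 < t" "t \<le> 1" and "u \<le> 1 - t\<^sup>2" "u \<le> (t * tan \<theta>)\<^sup>2" using radius by auto
    moreover have "0 < t\<^sup>2 + u" using t u by (simp add: add_pos_nonneg)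
    ultimately show "0 < sqrt (t\<^sup>2 + u) \<and> sqrt (t\<^sup>2 + u) \<le> 1 \<and> cos \<theta> * sqrt (t\<^sup>2 + u) \<le> t"
      using cone unfolding e_def c_def by auto
  qed
qed

lemma sets_sph_cone:
  assumes "1 \<le> N" "0 \<le> \<theta>" "\<theta> \<le> pi"
  shows "sph_cone N \<theta> \<in> sets (lebN N)"
proof -
  have [measurable]: "(\<lambda>y. y 0) \<in> borel_measurable (lebN N)"
    using measurable_component_singleton[of 0 "{..<N}" "\<lambda>_. lborel"] assms(1) by simp
  have "(\<lambda>y. cos \<theta> * enorm N y) \<in> borel_measurable (lebN N)" by measurable
  hence "{y \<in> space (lebN N). cos \<theta> * enorm N y \<le> y 0} \<in> sets (lebN N)"
    by (rule borel_measurable_le) measurable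
  moreover have "{y \<in> space (lebN N). 0 < enorm N y \<and> enorm N y \<le> 1} \<in> sets (lebN N)"
    by measurable
  moreover have "sph_cone N \<theta> = {y \<in> space (lebN N). 0 < enorm N y \<and> enorm N y \<le> 1} \<inter>
                                {y \<in> space (lebN N). cos \<theta> * enorm N y \<le> y 0}"
    unfolding sph_cone_eq[OF assms] by auto
  ultimately show ?thesis by simp
qed

lemma measure_sph_cone:
  assumes N: "2 \<le> N" and \<theta>: "0 \<le> \<theta>" "\<theta> < pi / 2"
  shows "measure (lebN N) (sph_cone N \<theta>) = unit_ball_vol (real (N - 1)) * sector_integral N \<theta>"
proof -
  let ?P = "\<lambda>t u. 0 < sqrt (t\<^sup>2 + u) \<and> sqrt (t\<^sup>2 + u) \<le> 1 \<and> cos \<theta> * sqrt (t\<^sup>2 + u) \<le> t"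
  have sets: "sph_cone N \<theta> \<in> sets (lebN N)" using N \<theta> by (intro sets_sph_cone) auto
  have slices: "sph_cone N \<theta> = {y \<in> space (lebN N). ?P (y 0) (\<Sum>i\<in>{1..<N}. (y i)\<^sup>2)}"
    using N \<theta> enorm_eq_sqrt_first_and_rest[of N] by (subst sph_cone_eq) auto
  have integral: "((\<lambda>t. cone_slice_radius \<theta> t ^ (N - 1)) has_integral sector_integral N \<theta>) {0<..1}"
  proof (rule has_integral_spike_set_eq[THEN iffD1])
    show "((\<lambda>t. cone_slice_radius \<theta> t ^ (N - 1)) has_integral sector_integral N \<theta>) {0..1}"
      using has_integral_cone_slice_radius_power[OF \<theta>, of "N - 1"] N by simp
    show "negligible {t \<in> {0..1} - {0<..1}. cone_slice_radius \<theta> t ^ (N - 1) \<noteq> 0}"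
      by (rule negligible_subset[of "{0}"]) auto
    show "negligible {t \<in> {0<..1} - {0..1}. cone_slice_radius \<theta> t ^ (N - 1) \<noteq> 0}"
      by (rule negligible_subset[of "{}"]) auto
  qed
  show ?thesis unfolding slices
  proof (rule measure_lebN_slices[where T = "{0<..1}" and \<rho> = "cone_slice_radius \<theta>", OF N])
    show "{y \<in> space (lebN N). ?P (y 0) (\<Sum>i\<in>{1..<N}. (y i)\<^sup>2)} \<in> sets (lebN N)"
      using sets unfolding slices .
    show "?P t u \<longleftrightarrow> t \<in> {0<..1} \<and> sqrt u \<le> cone_slice_radius \<theta> t" if "0 \<le> u" for t u
      using cone_slice_iff[OF \<theta> that] .
    show "0 \<le> cone_slice_radius \<theta> t" if "t \<in> {0<..1}" for t
      using that by (intro cone_slice_radius_nonneg) auto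
  qed (fact integral)
qed

lemma sph_frac_eq_sector_integral:
  assumes "2 \<le> N" "0 \<le> \<theta>" "\<theta> < pi / 2"
  shows "sph_frac N \<theta> = sector_integral N \<theta> / wallis N"
proof -
  have "0 < unit_ball_vol (real (N - 1))" by simp
  hence "unit_ball_vol (real (N - 1)) \<noteq> 0" by linarith
  thus ?thesis
    unfolding sph_frac_def measure_sph_cone[OF assms] measure_lebN_unit_ball[OF assms(1)]
    by (simp only: mult_divide_mult_cancel_left_if if_False)
qed

lemma sph_frac_0: "2 \<le> N \<Longrightarrow> sph_frac N 0 = 0"
  by (simp add: sph_frac_eq_sector_integral sector_integral_0)

lemma sph_frac_pos: "2 \<le> N \<Longrightarrow> 0 < \<theta> \<Longrightarrow> \<theta> < pi / 2 \<Longrightarrow> 0 < sph_frac N \<theta>"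
  by (simp add: sph_frac_eq_sector_integral sector_integral_pos wallis_pos)

lemma sph_frac_has_real_derivative:
  assumes "2 \<le> N" "0 < \<theta>" "\<theta> < pi / 2"
  shows "(sph_frac N has_real_derivative real (N - 1) / real N * sin \<theta> ^ (N - 2) / wallis N) (at \<theta>)"
proof (rule has_field_derivative_transform_within_open[where S = "{0<..<pi / 2}"])
  show "((\<lambda>x. sector_integral N x / wallis N) has_real_derivative
          real (N - 1) / real N * sin \<theta> ^ (N - 2) / wallis N) (at \<theta>)"
    using assms by (intro DERIV_cdivide sector_integral_has_real_derivative)
qed (use assms sph_frac_eq_sector_integral in auto)

section \<open>The angular radius of the cap\<close>

lemma enorm_nonneg: "0 \<le> enorm N y"
  unfolding enorm_def by (simp add: sum_nonneg)

lemma enorm_square: "(enorm N y)\<^sup>2 = (\<Sum>i<N. (y i)\<^sup>2)"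
  unfolding enorm_def by (simp add: sum_nonneg)

lemma einner_commute: "einner N y z = einner N z y"
  unfolding einner_def by (simp add: mult.commute)

lemma einner_self: "einner N y y = (enorm N y)\<^sup>2"
  unfolding einner_def enorm_square by (simp add: power2_eq_square)

lemma einner_lincomb_left:
  "einner N (\<lambda>i. a * y i + b * z i) w = a * einner N y w + b * einner N z w"
  unfolding einner_def by (simp add: distrib_right sum.distrib sum_distrib_left mult.assoc)

lemma enorm_lincomb_square:
  "(enorm N (\<lambda>i. a * y i + b * z i))\<^sup>2 =
     a\<^sup>2 * (enorm N y)\<^sup>2 + 2 * a * b * einner N y z + b\<^sup>2 * (enorm N z)\<^sup>2"
proof -
  have "(\<Sum>i<N. (a * y i + b * z i)\<^sup>2) =
          (\<Sum>i<N. a\<^sup>2 * (y i)\<^sup>2 + 2 * a * b * (y i * z i) + b\<^sup>2 * (z i)\<^sup>2)"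
    by (intro sum.cong) (auto simp: power2_eq_square algebra_simps)
  thus ?thesis unfolding enorm_square einner_def by (simp add: sum.distrib sum_distrib_left)
qed

lemma enorm_diff_square:
  "(enorm N (\<lambda>i. y i - z i))\<^sup>2 = (enorm N y)\<^sup>2 - 2 * einner N y z + (enorm N z)\<^sup>2"
  using enorm_lincomb_square[of N 1 y "-1" z] by simp

lemma einner_le_enorm_mult: "einner N y z \<le> enorm N y * enorm N z"
proof -
  have "einner N y z \<le> sqrt ((einner N y z)\<^sup>2)" by simp
  also have "\<dots> \<le> sqrt ((\<Sum>i<N. (y i)\<^sup>2) * (\<Sum>i<N. (z i)\<^sup>2))"
    unfolding einner_def by (intro real_sqrt_le_mono Cauchy_Schwarz_ineq_sum)
  also have "\<dots> = enorm N y * enorm N z" by (simp add: enorm_def real_sqrt_mult)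
  finally show ?thesis .
qed

lemma exists_unit_orthogonal:
  assumes "2 \<le> N"
  shows "\<exists>w. einner N w v = 0 \<and> enorm N w = 1"
proof -
  have first_two: "(\<Sum>i<N. f i) = f 0 + f 1" if "\<And>i. 2 \<le> i \<Longrightarrow> f i = 0" for f :: "nat \<Rightarrow> real"
  proof -
    have "(\<Sum>i<N. f i) = (\<Sum>i\<in>{0, 1}. f i)" using assms that by (intro sum.mono_neutral_right) auto
    thus ?thesis by simp
  qed
  obtain a b where ab: "a * v 0 + b * v 1 = 0" "a\<^sup>2 + b\<^sup>2 = 1"
  proof (cases "v 0 = 0 \<and> v 1 = 0")
    case True
    thus ?thesis using that[of 1 0] by simp
  next
    case False
    define q where "q = sqrt ((v 0)\<^sup>2 + (v 1)\<^sup>2)"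
    have "0 < (v 0)\<^sup>2 + (v 1)\<^sup>2" using False by (simp add: sum_power2_gt_zero_iff)
    hence q: "0 < q" "q\<^sup>2 = (v 0)\<^sup>2 + (v 1)\<^sup>2" unfolding q_def by auto
    show ?thesis
    proof (rule that)
      show "- v 1 / q * v 0 + v 0 / q * v 1 = 0" by (simp add: field_simps)
      have "(- v 1 / q)\<^sup>2 + (v 0 / q)\<^sup>2 = ((v 0)\<^sup>2 + (v 1)\<^sup>2) / q\<^sup>2"
        by (simp add: power_divide add_divide_distrib)
      thus "(- v 1 / q)\<^sup>2 + (v 0 / q)\<^sup>2 = 1" using q False by simp
    qed
  qed
  define w :: "nat \<Rightarrow> real" where "w i = (if i = 0 then a else if i = 1 then b else 0)" for i
  have "einner N w v = a * v 0 + b * v 1" unfolding einner_def by (subst first_two) (auto simp: w_def)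
  moreover have "enorm N w = sqrt (a\<^sup>2 + b\<^sup>2)" unfolding enorm_def by (subst first_two) (auto simp: w_def)
  ultimately show ?thesis using ab by auto
qed

lemma arccos_angle_le_of_enorm_diff_le:
  assumes y: "enorm N y = r" and z: "enorm N z = R" and pos: "0 < r" "0 < R"
    and dist: "enorm N (\<lambda>i. y i - z i) \<le> s"
    and lower: "-1 \<le> (r\<^sup>2 + R\<^sup>2 - s\<^sup>2) / (2 * R * r)"
  shows "arccos (einner N y z / (enorm N y * enorm N z)) \<le> arccos ((r\<^sup>2 + R\<^sup>2 - s\<^sup>2) / (2 * R * r))"
proof -
  have "(enorm N (\<lambda>i. y i - z i))\<^sup>2 \<le> s\<^sup>2" using dist enorm_nonneg by (intro power_mono)
  hence "(r\<^sup>2 + R\<^sup>2 - s\<^sup>2) / 2 \<le> einner N y z" using enorm_diff_square[of N y z] y z by simp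
  hence "(r\<^sup>2 + R\<^sup>2 - s\<^sup>2) / 2 / (r * R) \<le> einner N y z / (r * R)"
    using pos by (intro divide_right_mono) auto
  hence "(r\<^sup>2 + R\<^sup>2 - s\<^sup>2) / (2 * R * r) \<le> einner N y z / (r * R)" by (simp add: ac_simps)
  moreover have "einner N y z / (r * R) \<le> 1"
    using einner_le_enorm_mult[of N y z] y z pos by simp
  ultimately show ?thesis using lower y z by (simp add: arccos_le_arccos)
qed

lemma exists_point_at_angle:
  assumes N: "2 \<le> N" and z: "enorm N z = R" and pos: "0 < r" "0 < R" and c: "\<bar>c\<bar> \<le> 1"
  shows "\<exists>y. enorm N y = r \<and> einner N y z = r * R * c \<and>
             (enorm N (\<lambda>i. y i - z i))\<^sup>2 = r\<^sup>2 - 2 * r * R * c + R\<^sup>2"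
proof -
  obtain w where w: "einner N w z = 0" "enorm N w = 1" using exists_unit_orthogonal[OF N] by blast
  define y where "y i = (r * c / R) * z i + (r * sqrt (1 - c\<^sup>2)) * w i" for i
  have c2: "0 \<le> 1 - c\<^sup>2" using c by (simp add: abs_square_le_1)
  have "(enorm N y)\<^sup>2 = (r * c / R)\<^sup>2 * R\<^sup>2 + (r * sqrt (1 - c\<^sup>2))\<^sup>2"
    unfolding y_def enorm_lincomb_square using w z by (simp add: einner_commute)
  also have "\<dots> = r\<^sup>2" using pos c2 by (simp add: power_mult_distrib power_divide field_simps)
  finally have "enorm N y = r" using pos enorm_nonneg by (simp add: power2_eq_iff_nonneg)
  moreover have "einner N y z = r * R * c"
    unfolding y_def einner_lincomb_left using w z pos by (simp add: einner_self power2_eq_square)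
  ultimately show ?thesis using enorm_diff_square[of N y z] z by auto
qed

lemma cap_angle_eq_arccos:
  assumes N: "2 \<le> N" and z: "enorm N z = R" and pos: "0 < r" "0 < R"
    and s: "\<bar>r - R\<bar> \<le> s" "s \<le> r + R"
  shows "cap_angle N z s r = arccos ((r\<^sup>2 + R\<^sup>2 - s\<^sup>2) / (2 * R * r))"
proof -
  define c where "c = (r\<^sup>2 + R\<^sup>2 - s\<^sup>2) / (2 * R * r)"
  have s0: "0 \<le> s" using s(1) by linarith
  have "(r - R)\<^sup>2 \<le> s\<^sup>2" using s(1) s0 by (simp add: power2_le_iff_abs_le)
  moreover have "s\<^sup>2 \<le> (r + R)\<^sup>2" using power_mono[OF s(2) s0] .
  ultimately have "- (2 * R * r) \<le> r\<^sup>2 + R\<^sup>2 - s\<^sup>2" "r\<^sup>2 + R\<^sup>2 - s\<^sup>2 \<le> 2 * R * r"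
    by (simp_all add: power2_diff power2_sum algebra_simps)
  moreover have "0 < 2 * R * r" using pos by simp
  ultimately have c: "\<bar>c\<bar> \<le> 1" unfolding c_def abs_le_iff
    by (simp add: pos_divide_le_eq pos_le_divide_eq)
  obtain y where y: "enorm N y = r" "einner N y z = r * R * c"
    "(enorm N (\<lambda>i. y i - z i))\<^sup>2 = r\<^sup>2 - 2 * r * R * c + R\<^sup>2"
    using exists_point_at_angle[OF N z pos c] by blast
  have "r\<^sup>2 - 2 * r * R * c + R\<^sup>2 = s\<^sup>2" unfolding c_def using pos by (simp add: field_simps)
  hence "enorm N (\<lambda>i. y i - z i) = s" using y(3) enorm_nonneg s0 by (simp add: power2_eq_iff_nonneg)
  moreover have "arccos c = arccos (einner N y z / (enorm N y * enorm N z))" using y z pos by simp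
  ultimately have attained: "arccos c \<in> (\<lambda>y. arccos (einner N y z / (enorm N y * enorm N z))) `
                               {y. enorm N y = r \<and> enorm N (\<lambda>i. y i - z i) \<le> s}"
    using y(1) by (intro rev_image_eqI[of y]) auto
  have "arccos (einner N y' z / (enorm N y' * enorm N z)) \<le> arccos c"
    if "enorm N y' = r" "enorm N (\<lambda>i. y' i - z i) \<le> s" for y'
    using arccos_angle_le_of_enorm_diff_le[OF that(1) z pos that(2)] c
    unfolding c_def[symmetric] by (simp add: abs_le_iff)
  thus ?thesis
    unfolding cap_angle_def c_def[symmetric] using attained by (intro cSup_eq_maximum) auto
qed

section \<open>The angle theta(x, r) and the function h\<close>

lemma setting_radii:
  assumes "setting N n \<tau> \<beta> x ybar"
  shows "3 \<le> N" "0 < \<tau>" "(Rrad N \<tau>)\<^sup>2 = 2 * real N * \<tau>" "0 < Rrad N \<tau>"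
    "enorm N ybar = Rrad N \<tau>" "0 \<le> sval N \<tau> \<beta> n x" "sval N \<tau> \<beta> n x < Rrad N \<tau>"
    "(rbar N \<tau> \<beta> n x)\<^sup>2 = (Rrad N \<tau>)\<^sup>2 - (sval N \<tau> \<beta> n x)\<^sup>2"
proof -
  define R where "R = Rrad N \<tau>"
  define s where "s = sval N \<tau> \<beta> n x"
  have st: "3 \<le> N" "0 < \<tau>" "0 < \<beta>" "\<beta> < 1" "enorm N ybar = R" "enorm n x \<le> \<beta> * R"
    using assms unfolding setting_def R_def by auto
  thus "3 \<le> N" "0 < \<tau>" "enorm N ybar = Rrad N \<tau>" unfolding R_def by auto
  show "(Rrad N \<tau>)\<^sup>2 = 2 * real N * \<tau>" "0 < Rrad N \<tau>" unfolding Rrad_def using st by auto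
  hence R: "0 < R" unfolding R_def by simp
  have "(enorm n x)\<^sup>2 \<le> (\<beta> * R)\<^sup>2" using st enorm_nonneg by (intro power_mono) auto
  hence s2: "s\<^sup>2 = \<beta>\<^sup>2 * R\<^sup>2 - (enorm n x)\<^sup>2" and s: "0 \<le> s"
    unfolding s_def sval_def R_def by (simp_all add: power_mult_distrib)
  show "0 \<le> sval N \<tau> \<beta> n x" using s unfolding s_def .
  have "\<beta>\<^sup>2 * R\<^sup>2 < 1 * R\<^sup>2" using st R by (intro mult_strict_right_mono) (auto simp: power_less_one_iff)
  hence "s\<^sup>2 < R\<^sup>2" using s2 zero_le_power2[of "enorm n x"] by linarith
  thus "sval N \<tau> \<beta> n x < Rrad N \<tau>" using s R unfolding s_def R_def by (simp add: power_less_imp_less_base)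
  thus "(rbar N \<tau> \<beta> n x)\<^sup>2 = (Rrad N \<tau>)\<^sup>2 - (sval N \<tau> \<beta> n x)\<^sup>2"
    using \<open>s\<^sup>2 < R\<^sup>2\<close> unfolding rbar_def s_def R_def by simp
qed

lemma theta_eq_arccos:
  assumes set: "setting N n \<tau> \<beta> x ybar"
    and r: "Rrad N \<tau> - sval N \<tau> \<beta> n x \<le> r" "r \<le> Rrad N \<tau> + sval N \<tau> \<beta> n x"
  shows "theta N \<tau> \<beta> n x ybar r = arccos ((r\<^sup>2 + (rbar N \<tau> \<beta> n x)\<^sup>2) / (2 * Rrad N \<tau> * r))"
proof -
  note F = setting_radii[OF set]
  have "theta N \<tau> \<beta> n x ybar r =
          arccos ((r\<^sup>2 + (Rrad N \<tau>)\<^sup>2 - (sval N \<tau> \<beta> n x)\<^sup>2) / (2 * Rrad N \<tau> * r))"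
    unfolding theta_def using F r by (intro cap_angle_eq_arccos) (auto simp: abs_le_iff)
  thus ?thesis using F(8) by (simp add: add_diff_eq)
qed

lemma cap_cosine_bounds:
  fixes R s \<rho> r :: real
  assumes s: "0 \<le> s" "s < R" and \<rho>: "\<rho>\<^sup>2 = R\<^sup>2 - s\<^sup>2" and r: "R - s < r" "r < R + s"
  shows "0 < (r\<^sup>2 + \<rho>\<^sup>2) / (2 * R * r)" "(r\<^sup>2 + \<rho>\<^sup>2) / (2 * R * r) < 1"
proof -
  have pos: "0 < R" "0 < r" using s r by linarith+
  have "s\<^sup>2 < R\<^sup>2" using s by (simp add: power_strict_mono)
  hence "0 < r\<^sup>2 + \<rho>\<^sup>2" using \<rho> by (simp add: add_nonneg_pos)
  thus "0 < (r\<^sup>2 + \<rho>\<^sup>2) / (2 * R * r)" using pos by simp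
  have "\<bar>r - R\<bar> < s" using r by auto
  hence "(r - R)\<^sup>2 < s\<^sup>2" by (metis abs_ge_zero power2_abs power_strict_mono zero_less_numeral)
  hence "r\<^sup>2 + \<rho>\<^sup>2 < 2 * R * r" using \<rho> by (simp add: power2_diff algebra_simps)
  thus "(r\<^sup>2 + \<rho>\<^sup>2) / (2 * R * r) < 1" using pos by simp
qed

lemma cos_theta:
  assumes set: "setting N n \<tau> \<beta> x ybar"
    and r: "Rrad N \<tau> - sval N \<tau> \<beta> n x < r" "r < Rrad N \<tau> + sval N \<tau> \<beta> n x"
  shows "cos (theta N \<tau> \<beta> n x ybar r) = (r\<^sup>2 + (rbar N \<tau> \<beta> n x)\<^sup>2) / (2 * Rrad N \<tau> * r)"
  using theta_eq_arccos[OF set] r cap_cosine_bounds[OF setting_radii(6-8)[OF set] r]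
  by (simp add: cos_arccos)

lemma theta_gt_0_less_pi_half:
  assumes set: "setting N n \<tau> \<beta> x ybar"
    and r: "Rrad N \<tau> - sval N \<tau> \<beta> n x < r" "r < Rrad N \<tau> + sval N \<tau> \<beta> n x"
  shows "0 < theta N \<tau> \<beta> n x ybar r" "theta N \<tau> \<beta> n x ybar r < pi / 2"
proof -
  define c where "c = (r\<^sup>2 + (rbar N \<tau> \<beta> n x)\<^sup>2) / (2 * Rrad N \<tau> * r)"
  have c: "0 < c" "c < 1"
    unfolding c_def using cap_cosine_bounds[OF setting_radii(6-8)[OF set] r] by auto
  have \<theta>: "theta N \<tau> \<beta> n x ybar r = arccos c"
    unfolding c_def using theta_eq_arccos[OF set] r by simp
  show "0 < theta N \<tau> \<beta> n x ybar r"
    unfolding \<theta> using arccos_less_arccos[of c 1] c by simp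
  show "theta N \<tau> \<beta> n x ybar r < pi / 2"
    unfolding \<theta> using arccos_less_arccos[of 0 c] c by simp
qed

lemma theta_has_real_derivative:
  assumes set: "setting N n \<tau> \<beta> x ybar"
    and r: "Rrad N \<tau> - sval N \<tau> \<beta> n x < r" "r < Rrad N \<tau> + sval N \<tau> \<beta> n x"
  shows "(theta N \<tau> \<beta> n x ybar has_real_derivative
            - (1 / sin (theta N \<tau> \<beta> n x ybar r)) *
              ((r\<^sup>2 - (rbar N \<tau> \<beta> n x)\<^sup>2) / (2 * Rrad N \<tau> * r\<^sup>2))) (at r)"
proof -
  define R s \<rho> where "R = Rrad N \<tau>" and "s = sval N \<tau> \<beta> n x" and "\<rho> = rbar N \<tau> \<beta> n x"
  define c where "c r' = (r'\<^sup>2 + \<rho>\<^sup>2) / (2 * R * r')" for r'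
  have F: "0 < R" "0 \<le> s" "s < R" "\<rho>\<^sup>2 = R\<^sup>2 - s\<^sup>2"
    using setting_radii[OF set] unfolding R_def s_def \<rho>_def by auto
  have r': "R - s < r" "r < R + s" using r unfolding R_def s_def by auto
  have c: "0 < c r" "c r < 1" unfolding c_def using cap_cosine_bounds[OF F(2-4) r'] by auto
  have \<theta>: "theta N \<tau> \<beta> n x ybar r' = arccos (c r')" if "r' \<in> {R - s<..<R + s}" for r'
    using theta_eq_arccos[OF set, of r'] that unfolding c_def R_def s_def \<rho>_def by auto
  have "(arccos has_real_derivative inverse (- sqrt (1 - (c r)\<^sup>2))) (at (c r))"
    using c by (intro DERIV_arccos) auto
  moreover have "(c has_real_derivative (r\<^sup>2 - \<rho>\<^sup>2) / (2 * R * r\<^sup>2)) (at r)"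
    unfolding c_def using F r' by (auto intro!: derivative_eq_intros simp: field_simps power2_eq_square)
  ultimately have "((\<lambda>r'. arccos (c r')) has_real_derivative
                     inverse (- sqrt (1 - (c r)\<^sup>2)) * ((r\<^sup>2 - \<rho>\<^sup>2) / (2 * R * r\<^sup>2))) (at r)"
    by (rule DERIV_chain2)
  moreover have "sqrt (1 - (c r)\<^sup>2) = sin (theta N \<tau> \<beta> n x ybar r)"
    using \<theta> r' c by (simp add: sin_arccos)
  ultimately have "((\<lambda>r'. arccos (c r')) has_real_derivative
        - (1 / sin (theta N \<tau> \<beta> n x ybar r)) * ((r\<^sup>2 - \<rho>\<^sup>2) / (2 * R * r\<^sup>2))) (at r)"
    by (simp add: inverse_eq_divide)
  thus ?thesis unfolding R_def \<rho>_def
    by (rule has_field_derivative_transform_within_open[where S = "{R - s<..<R + s}"])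
       (use r' \<theta> in auto)
qed

lemma theta_at_endpoints:
  assumes set: "setting N n \<tau> \<beta> x ybar"
  shows "theta N \<tau> \<beta> n x ybar (Rrad N \<tau> - sval N \<tau> \<beta> n x) = 0"
    "theta N \<tau> \<beta> n x ybar (Rrad N \<tau> + sval N \<tau> \<beta> n x) = 0"
proof -
  define R s \<rho> where "R = Rrad N \<tau>" and "s = sval N \<tau> \<beta> n x" and "\<rho> = rbar N \<tau> \<beta> n x"
  have F: "0 < R" "0 \<le> s" "s < R" "\<rho>\<^sup>2 = R\<^sup>2 - s\<^sup>2"
    using setting_radii[OF set] unfolding R_def s_def \<rho>_def by auto
  have \<theta>: "theta N \<tau> \<beta> n x ybar r = arccos ((r\<^sup>2 + \<rho>\<^sup>2) / (2 * R * r))"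
    if "R - s \<le> r" "r \<le> R + s" for r
    using theta_eq_arccos[OF set] that unfolding R_def s_def \<rho>_def by simp
  have "(R - s)\<^sup>2 + \<rho>\<^sup>2 = 2 * R * (R - s)" "(R + s)\<^sup>2 + \<rho>\<^sup>2 = 2 * R * (R + s)"
    using F(4) by (simp_all add: power2_eq_square algebra_simps)
  moreover have "2 * R * (R - s) \<noteq> 0" "2 * R * (R + s) \<noteq> 0" using F by simp_all
  ultimately have "((R - s)\<^sup>2 + \<rho>\<^sup>2) / (2 * R * (R - s)) = 1"
    "((R + s)\<^sup>2 + \<rho>\<^sup>2) / (2 * R * (R + s)) = 1" by simp_all
  thus "theta N \<tau> \<beta> n x ybar (Rrad N \<tau> - sval N \<tau> \<beta> n x) = 0"
    "theta N \<tau> \<beta> n x ybar (Rrad N \<tau> + sval N \<tau> \<beta> n x) = 0"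
    using \<theta>[of "R - s"] \<theta>[of "R + s"] F(2) unfolding R_def s_def by simp_all
qed

lemma hfun_pos:
  assumes set: "setting N n \<tau> \<beta> x ybar"
    and r: "Rrad N \<tau> - sval N \<tau> \<beta> n x < r" "r < Rrad N \<tau> + sval N \<tau> \<beta> n x"
  shows "0 < hfun N \<tau> \<beta> n x ybar r"
proof -
  have "0 < r" using r setting_radii[OF set] by linarith
  moreover have "0 < sph_frac N (theta N \<tau> \<beta> n x ybar r)"
    using setting_radii(1)[OF set] theta_gt_0_less_pi_half[OF set r] by (intro sph_frac_pos) auto
  ultimately show ?thesis unfolding hfun_def by simp
qed

lemma hfun_at_endpoints:
  assumes set: "setting N n \<tau> \<beta> x ybar"
  shows "hfun N \<tau> \<beta> n x ybar (Rrad N \<tau> - sval N \<tau> \<beta> n x) = 0"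
    "hfun N \<tau> \<beta> n x ybar (Rrad N \<tau> + sval N \<tau> \<beta> n x) = 0"
  using theta_at_endpoints[OF set] sph_frac_0 setting_radii(1)[OF set] unfolding hfun_def by simp_all

section \<open>The chain rule for gamma(theta(x, r))\<close>

lemma power2_powr_half:
  assumes "0 < a"
  shows "(a\<^sup>2) powr (real k / 2) = a ^ k"
proof -
  have "(a\<^sup>2) powr (real k / 2) = (a powr 2) powr (real k / 2)" using assms by simp
  also have "\<dots> = a powr real k" by (simp add: powr_powr)
  finally show ?thesis using assms by (simp add: powr_realpow)
qed

lemma powr_cap_base_eq_sin_theta_power:
  assumes set: "setting N n \<tau> \<beta> x ybar"
    and r: "Rrad N \<tau> - sval N \<tau> \<beta> n x < r" "r < Rrad N \<tau> + sval N \<tau> \<beta> n x"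
  shows "(1 - (r\<^sup>2 + (rbar N \<tau> \<beta> n x)\<^sup>2)\<^sup>2 / (8 * real N * \<tau> * r\<^sup>2)) powr ((real N - 3) / 2) =
           sin (theta N \<tau> \<beta> n x ybar r) ^ (N - 3)"
proof -
  define \<theta> where "\<theta> = theta N \<tau> \<beta> n x ybar r"
  have N: "3 \<le> N" using setting_radii[OF set] by simp
  have "sin \<theta> > 0" using theta_gt_0_less_pi_half[OF set r] unfolding \<theta>_def by (intro sin_gt_zero) auto
  moreover have "(2 * Rrad N \<tau> * r)\<^sup>2 = 8 * real N * \<tau> * r\<^sup>2"
    using setting_radii(3)[OF set] by (simp add: power_mult_distrib)
  hence "(r\<^sup>2 + (rbar N \<tau> \<beta> n x)\<^sup>2)\<^sup>2 / (8 * real N * \<tau> * r\<^sup>2) = (cos \<theta>)\<^sup>2"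
    unfolding \<theta>_def cos_theta[OF set r] by (simp add: power_divide)
  ultimately show ?thesis
    using power2_powr_half[of "sin \<theta>" "N - 3"] N unfolding \<theta>_def[symmetric]
    by (simp add: sin_squared_eq of_nat_diff)
qed

lemma sqrt_pi_mult_eq:
  assumes "0 < \<tau>" "0 < N"
  shows "sqrt (pi * \<tau>) = Rrad N \<tau> * sqrt (2 * pi / real N) / 2"
proof -
  have "Rrad N \<tau> * sqrt (2 * pi / real N) = sqrt (4 * (pi * \<tau>))"
    unfolding Rrad_def using assms by (simp add: real_sqrt_mult[symmetric] field_simps)
  thus ?thesis by (simp add: real_sqrt_mult)
qed

lemma sph_frac_theta_chain_rule:
  assumes set: "setting N n \<tau> \<beta> x ybar"
    and r: "Rrad N \<tau> - sval N \<tau> \<beta> n x < r" "r < Rrad N \<tau> + sval N \<tau> \<beta> n x"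
  shows "\<exists>e g. \<bar>e\<bar> \<le> 1 / real N \<and>
           (sph_frac N has_real_derivative g) (at (theta N \<tau> \<beta> n x ybar r)) \<and>
           g * deriv (theta N \<tau> \<beta> n x ybar) r =
             - (1 + e) / (4 * sqrt (pi * \<tau>) * r\<^sup>2) * (r\<^sup>2 - (rbar N \<tau> \<beta> n x)\<^sup>2) *
               (1 - (r\<^sup>2 + (rbar N \<tau> \<beta> n x)\<^sup>2)\<^sup>2 / (8 * real N * \<tau> * r\<^sup>2)) powr ((real N - 3) / 2)"
proof -
  define \<theta> R \<rho> where "\<theta> = theta N \<tau> \<beta> n x ybar r" and "R = Rrad N \<tau>" and "\<rho> = rbar N \<tau> \<beta> n x"
  define q where "q = sqrt (2 * pi / real N)"
  define e where "e = (real N - 1) / real N * (q / wallis N) - 1"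
  define g where "g = real (N - 1) / real N * sin \<theta> ^ (N - 2) / wallis N"
  have N: "3 \<le> N" and \<tau>: "0 < \<tau>" and R: "0 < R" using setting_radii[OF set] unfolding R_def by auto
  hence N0: "0 < N" by simp
  have r0: "0 < r" using r setting_radii[OF set] by linarith
  have \<theta>: "0 < \<theta>" "\<theta> < pi / 2" unfolding \<theta>_def using theta_gt_0_less_pi_half[OF set r] by auto
  hence sin: "0 < sin \<theta>" by (intro sin_gt_zero) auto
  have W: "0 < wallis N" using N by (intro wallis_pos) simp
  have q: "0 < q" unfolding q_def using N by simp
  have g: "(sph_frac N has_real_derivative g) (at \<theta>)"
    unfolding g_def using N \<theta> by (intro sph_frac_has_real_derivative) auto
  have e: "\<bar>e\<bar> \<le> 1 / real N" unfolding e_def q_def using N by (intro wallis_ratio_error) simp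
  have deriv: "deriv (theta N \<tau> \<beta> n x ybar) r = - (1 / sin \<theta>) * ((r\<^sup>2 - \<rho>\<^sup>2) / (2 * R * r\<^sup>2))"
    unfolding \<theta>_def R_def \<rho>_def by (rule DERIV_imp_deriv[OF theta_has_real_derivative[OF set r]])
  have "sin \<theta> ^ (N - 2) = sin \<theta> ^ (N - 3) * sin \<theta>"
  proof -
    have "N - 2 = Suc (N - 3)" using N by simp
    thus ?thesis by (simp add: mult.commute)
  qed
  moreover have "real (N - 1) = real N - 1" using N by simp
  ultimately have "g * deriv (theta N \<tau> \<beta> n x ybar) r =
      - (1 + e) / (4 * (R * q / 2) * r\<^sup>2) * (r\<^sup>2 - \<rho>\<^sup>2) * sin \<theta> ^ (N - 3)"
    unfolding deriv g_def e_def using sin W R r0 q by (simp add: field_simps)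
  also have "\<dots> = - (1 + e) / (4 * sqrt (pi * \<tau>) * r\<^sup>2) * (r\<^sup>2 - \<rho>\<^sup>2) *
        (1 - (r\<^sup>2 + \<rho>\<^sup>2)\<^sup>2 / (8 * real N * \<tau> * r\<^sup>2)) powr ((real N - 3) / 2)"
    unfolding \<theta>_def R_def q_def \<rho>_def powr_cap_base_eq_sin_theta_power[OF set r]
      sqrt_pi_mult_eq[OF \<tau> N0] by simp
  finally show ?thesis using e g unfolding \<theta>_def \<rho>_def by blast
qed

theorem lemma4p4:
  shows "(\<forall>N n \<tau> \<beta> x ybar r.
            setting N n \<tau> \<beta> x ybar \<and>
            Rrad N \<tau> - sval N \<tau> \<beta> n x < r \<and> r < Rrad N \<tau> + sval N \<tau> \<beta> n x \<longrightarrow>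
              cos (theta N \<tau> \<beta> n x ybar r) =
                (r\<^sup>2 + (rbar N \<tau> \<beta> n x)\<^sup>2) / (2 * Rrad N \<tau> * r) \<and>
              (theta N \<tau> \<beta> n x ybar has_real_derivative
                 (- (1 / sin (theta N \<tau> \<beta> n x ybar r)) *
                    ((r\<^sup>2 - (rbar N \<tau> \<beta> n x)\<^sup>2) / (2 * Rrad N \<tau> * r\<^sup>2)))) (at r) \<and>
              0 < hfun N \<tau> \<beta> n x ybar r)
       \<and> (\<forall>N n \<tau> \<beta> x ybar.
            setting N n \<tau> \<beta> x ybar \<longrightarrow>
              hfun N \<tau> \<beta> n x ybar (Rrad N \<tau> - sval N \<tau> \<beta> n x) = 0 \<and>
              hfun N \<tau> \<beta> n x ybar (Rrad N \<tau> + sval N \<tau> \<beta> n x) = 0)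
       \<and> (\<exists>C. \<forall>N n \<tau> \<beta> x ybar r.
            setting N n \<tau> \<beta> x ybar \<and>
            Rrad N \<tau> - sval N \<tau> \<beta> n x < r \<and> r < Rrad N \<tau> + sval N \<tau> \<beta> n x \<longrightarrow>
              (\<exists>e g. \<bar>e\<bar> \<le> C / real N \<and>
                 (sph_frac N has_real_derivative g) (at (theta N \<tau> \<beta> n x ybar r)) \<and>
                 g * deriv (theta N \<tau> \<beta> n x ybar) r =
                   - (1 + e) / (4 * sqrt (pi * \<tau>) * r\<^sup>2) * (r\<^sup>2 - (rbar N \<tau> \<beta> n x)\<^sup>2) *
                     (1 - (r\<^sup>2 + (rbar N \<tau> \<beta> n x)\<^sup>2)\<^sup>2 / (8 * real N * \<tau> * r\<^sup>2))
                       powr ((real N - 3) / 2)))"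
proof (intro conjI, goal_cases)
  case 1
  show ?case
    by (intro allI impI conjI; elim conjE; rule cos_theta theta_has_real_derivative hfun_pos)
next
  case 2
  show ?case by (intro allI impI conjI; rule hfun_at_endpoints)
next
  case 3
  show ?case by (rule exI[of _ 1], intro allI impI, elim conjE, rule sph_frac_theta_chain_rule)
qed

end
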